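(* Let $\mathcal L$ be a geometric lattice, $(\mathcal E,\iota)$ a modular extension of $\mathcal L$, and $F$ a modular coatom of $\mathcal L$. Let $P=\mathcal L\cup_{[\hat0,F]}\mathcal E=\{(A,B)\in\mathcal L\times\mathcal E:\ A\wedge F=\iota^{-1}(B\wedge\iota(F))\}$ with the order induced from $\mathcal L\times\mathcal E$ (a geometric lattice). Then the subset $\mathcal M=\{(A,B)\in P:\ \exists H\in\mathrm{At}(\mathcal L)\text{ with }H\not\le F,\ H\le A,\ \iota(H)\le B\}$ is a modular cut of $P$.
   Context: A geometric lattice is a finite lattice (bottom $\hat0$, top $\hat1$, join $\vee$, meet $\wedge$) which is ranked (rank function $\mathrm{rk}$), atomic and semimodular ($\mathrm{rk}(F_1\wedge F_2)+\mathrm{rk}(F_1\vee F_2)\le\mathrm{rk}(F_1)+\mathrm{rk}(F_2)$); its elements are called flats, its rank-one elements atoms ($\mathrm{At}(\mathcal L)$), and a coatom is a flat of rank $\mathrm{rk}(\hat1)-1$. A flat $F$ is modular if $\mathrm{rk}(F\wedge F')+\mathrm{rk}(F\vee F')=\mathrm{rk}(F)+\mathrm{rk}(F')$ for every flat $F'$. An embedding of geometric lattices is an injective order-preserving map preserving joins and sending atoms to atoms. A modular extension of $\mathcal L$ is a pair $(\mathcal E,\iota)$ with $\mathcal E$ a geometric lattice and $\iota:\mathcal L\to\mathcal E$ an embedding whose image is an interval $[\hat0,F_\iota]$ with $F_\iota$ modular in $\mathcal E$. A modular cut of a geometric lattice $P$ is a subset $\mathcal M\subseteq P$ which is upward closed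 and such that whenever $X,Y\in\mathcal M$ satisfy $\mathrm{rk}(X)+\mathrm{rk}(Y)=\mathrm{rk}(X\wedge Y)+\mathrm{rk}(X\vee Y)$, then $X\wedge Y\in\mathcal M$. *)

theory Defs
  imports "HOL-Library.Finite_Lattice" "HOL-Library.Product_Order"
begin

text \<open>All lattice-theoretic notions are defined relative to a finite carrier set S
  inside an ambient partially ordered type, with the induced order. For a type
  that is itself a finite lattice one takes S = UNIV.\<close>

definition is_meet_in :: "'c::order set \<Rightarrow> 'c \<Rightarrow> 'c \<Rightarrow> 'c \<Rightarrow> bool" where
  "is_meet_in S x y m \<longleftrightarrow> m \<in> S \<and> m \<le> x \<and> m \<le> y \<and> (\<forall>z\<in>S. z \<le> x \<and> z \<le> y \<longrightarrow> z \<le> m)"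

definition is_join_in :: "'c::order set \<Rightarrow> 'c \<Rightarrow> 'c \<Rightarrow> 'c \<Rightarrow> bool" where
  "is_join_in S x y j \<longleftrightarrow> j \<in> S \<and> x \<le> j \<and> y \<le> j \<and> (\<forall>z\<in>S. x \<le> z \<and> y \<le> z \<longrightarrow> j \<le> z)"

definition meet_in :: "'c::order set \<Rightarrow> 'c \<Rightarrow> 'c \<Rightarrow> 'c" where
  "meet_in S x y = (THE m. is_meet_in S x y m)"

definition join_in :: "'c::order set \<Rightarrow> 'c \<Rightarrow> 'c \<Rightarrow> 'c" where
  "join_in S x y = (THE j. is_join_in S x y j)"

definition is_lub_in :: "'c::order set \<Rightarrow> 'c set \<Rightarrow> 'c \<Rightarrow> bool" where
  "is_lub_in S A j \<longleftrightarrow> j \<in> S \<and> (\<forall>a\<in>A. a \<le> j) \<and> (\<forall>z\<in>S. (\<forall>a\<in>A. a \<le> z) \<longrightarrow> j \<le> z)"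

definition rank_in :: "'c::order set \<Rightarrow> 'c \<Rightarrow> nat" where
  "rank_in S x = Max {card C | C. C \<subseteq> {z \<in> S. z \<le> x} \<and> Complete_Partial_Order.chain (\<le>) C} - 1"

definition covers_in :: "'c::order set \<Rightarrow> 'c \<Rightarrow> 'c \<Rightarrow> bool" where
  "covers_in S x y \<longleftrightarrow> x \<in> S \<and> y \<in> S \<and> x < y \<and> \<not> (\<exists>z\<in>S. x < z \<and> z < y)"

definition is_bot_in :: "'c::order set \<Rightarrow> 'c \<Rightarrow> bool" where
  "is_bot_in S b \<longleftrightarrow> b \<in> S \<and> (\<forall>z\<in>S. b \<le> z)"

definition atom_in :: "'c::order set \<Rightarrow> 'c \<Rightarrow> bool" where
  "atom_in S a \<longleftrightarrow> (\<exists>b. is_bot_in S b \<and> covers_in S b a)"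

definition modular_in :: "'c::order set \<Rightarrow> 'c \<Rightarrow> bool" where
  "modular_in S F \<longleftrightarrow> F \<in> S \<and> (\<forall>G\<in>S. rank_in S (meet_in S F G) + rank_in S (join_in S F G)
                                     = rank_in S F + rank_in S G)"

text \<open>Geometric lattice: a finite lattice which is ranked (covers raise the rank by one),
  atomic (each element is the join of the atoms below it) and semimodular.\<close>
definition geometric_lattice_on :: "'c::order set \<Rightarrow> bool" where
  "geometric_lattice_on S \<longleftrightarrow> finite S \<and> S \<noteq> {}
     \<and> (\<forall>x\<in>S. \<forall>y\<in>S. (\<exists>m. is_meet_in S x y m) \<and> (\<exists>j. is_join_in S x y j))
     \<and> (\<forall>x y. covers_in S x y \<longrightarrow> rank_in S y = rank_in S x + 1)
     \<and> (\<forall>x\<in>S. is_lub_in S {a. atom_in S a \<and> a \<le> x} x)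
     \<and> (\<forall>x\<in>S. \<forall>y\<in>S. rank_in S (meet_in S x y) + rank_in S (join_in S x y) \<le> rank_in S x + rank_in S y)"

definition lattice_embedding :: "('a::finite_lattice_complete \<Rightarrow> 'b::finite_lattice_complete) \<Rightarrow> bool" where
  "lattice_embedding \<iota> \<longleftrightarrow> inj \<iota> \<and> mono \<iota> \<and> (\<forall>x y. \<iota> (sup x y) = sup (\<iota> x) (\<iota> y))
     \<and> (\<forall>a. atom_in UNIV a \<longrightarrow> atom_in UNIV (\<iota> a))"

definition modular_extension :: "('a::finite_lattice_complete \<Rightarrow> 'b::finite_lattice_complete) \<Rightarrow> bool" where
  "modular_extension \<iota> \<longleftrightarrow> geometric_lattice_on (UNIV :: 'b set) \<and> lattice_embedding \<iota>
     \<and> (\<exists>F\<iota>. range \<iota> = {y. y \<le> F\<iota>} \<and> modular_in UNIV F\<iota>)"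

definition modular_cut_in :: "'c::order set \<Rightarrow> 'c set \<Rightarrow> bool" where
  "modular_cut_in P M \<longleftrightarrow> M \<subseteq> P
     \<and> (\<forall>X\<in>M. \<forall>Y\<in>P. X \<le> Y \<longrightarrow> Y \<in> M)
     \<and> (\<forall>X\<in>M. \<forall>Y\<in>M. rank_in P X + rank_in P Y = rank_in P (meet_in P X Y) + rank_in P (join_in P X Y)
            \<longrightarrow> meet_in P X Y \<in> M)"

end

theory Submission
  imports Defs
begin

text \<open>Meets in P are componentwise. Let X = (A1, B1) and Y = (A2, B2) lie in M. If
  A1 \<sqinter> A2 is not below F, an atom of A1 \<sqinter> A2 outside F puts X \<sqinter> Y into M. Otherwise X, Y is
  not a modular pair. Indeed, since F is a modular coatom, (A, B) \<mapsto> rk B + [A not below F] is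
  strictly monotone on P and so bounds the rank of P from above; from below, the chain of E under
  B lifts to P via b \<mapsto> (\<iota>\<inverse>(b \<sqinter> \<iota> F), b) and can be topped by (A, B) when A is not below F.
  As X \<sqinter> Y has first component below F and X \<squnion> Y has second component B1 \<squnion> B2,
  semimodularity of E gives rank (X \<sqinter> Y) + rank (X \<squnion> Y) \<le> rk (B1 \<sqinter> B2) + rk (B1 \<squnion> B2) + 1
  < rk B1 + rk B2 + 2 \<le> rank X + rank Y.\<close>

lemma finite_chain_cards:
  "finite S \<Longrightarrow> finite {card C |C. C \<subseteq> {z \<in> S. z \<le> x} \<and> Complete_Partial_Order.chain (\<le>) C}"
  by (rule finite_subset[of _ "card ` Pow S"]) auto

lemma card_chain_le_rank_in:
  assumes "finite S" "C \<subseteq> {z \<in> S. z \<le> x}" "Complete_Partial_Order.chain (\<le>) C"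
  shows "card C \<le> rank_in S x + 1"
proof -
  have "card C \<le> Max {card C |C. C \<subseteq> {z \<in> S. z \<le> x} \<and> Complete_Partial_Order.chain (\<le>) C}"
    by (rule Max_ge[OF finite_chain_cards[OF assms(1)]]) (use assms(2,3) in blast)
  then show ?thesis unfolding rank_in_def by linarith
qed

lemma chain_insert_greatest:
  fixes y :: "'c::order"
  assumes "Complete_Partial_Order.chain (\<le>) C" "\<forall>c\<in>C. c \<le> y"
  shows "Complete_Partial_Order.chain (\<le>) (insert y C)"
  using assms unfolding chain_def by auto

lemma rank_in_chain:
  fixes x :: "'c::order"
  assumes "finite S" "x \<in> S"
  obtains C where "C \<subseteq> {z \<in> S. z \<le> x}" "Complete_Partial_Order.chain (\<le>) C"
    "card C = rank_in S x + 1"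
proof -
  let ?A = "{card C |C. C \<subseteq> {z \<in> S. z \<le> x} \<and> Complete_Partial_Order.chain (\<le>) C}"
  have "card {x} \<in> ?A"
    using assms(2) chain_insert_greatest[OF chain_empty, of x] by blast
  then have "?A \<noteq> {}" "1 \<le> Max ?A"
    using Max_ge[OF finite_chain_cards[OF assms(1)]] by auto
  moreover obtain C where "C \<subseteq> {z \<in> S. z \<le> x}" "Complete_Partial_Order.chain (\<le>) C"
    "card C = Max ?A"
    using Max_in[OF finite_chain_cards[OF assms(1)] \<open>?A \<noteq> {}\<close>] by auto
  ultimately show ?thesis using that unfolding rank_in_def by simp
qed

lemma strict_mono_on_rank_in:
  fixes S :: "'c::order set"
  assumes "finite S"
  shows "strict_mono_on S (rank_in S)"
proof (rule strict_mono_onI)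
  fix x y assume xy: "x \<in> S" "y \<in> S" "x < y"
  obtain C where C: "C \<subseteq> {z \<in> S. z \<le> x}" "Complete_Partial_Order.chain (\<le>) C"
    "card C = rank_in S x + 1"
    by (rule rank_in_chain[OF assms xy(1)])
  have below_y: "\<forall>c\<in>C. c \<le> y"
  proof
    fix c assume "c \<in> C"
    with C(1) have "c \<le> x" by blast
    then show "c \<le> y" using less_imp_le[OF xy(3)] by (rule order.trans)
  qed
  have "card (insert y C) \<le> rank_in S y + 1"
    using assms C(1) xy(2) below_y chain_insert_greatest[OF C(2) below_y]
    by (intro card_chain_le_rank_in) auto
  moreover have "finite C" using C(1) assms by (auto intro: finite_subset)
  moreover have "y \<notin> C" using C(1) xy(3) by auto
  ultimately show "rank_in S x < rank_in S y" using C(3) by simp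
qed

lemma rank_in_le_if_strict_mono_on:
  fixes g :: "'c::order \<Rightarrow> nat"
  assumes "finite S" "x \<in> S" "strict_mono_on S g"
  shows "rank_in S x \<le> g x"
proof -
  obtain C where C: "C \<subseteq> {z \<in> S. z \<le> x}" "Complete_Partial_Order.chain (\<le>) C"
    "card C = rank_in S x + 1"
    by (rule rank_in_chain[OF assms(1,2)])
  have "inj_on g C"
  proof (rule inj_onI)
    fix u v assume "u \<in> C" "v \<in> C" "g u = g v"
    with chainD[OF C(2)] C(1) strict_mono_onD[OF assms(3)] show "u = v"
      by (metis (no_types, lifting) less_irrefl mem_Collect_eq order.not_eq_order_implies_strict
          subsetD)
  qed
  moreover have "g ` C \<subseteq> {..g x}"
    using C(1) assms(2) strict_mono_onD[OF assms(3)] by (force simp: order.order_iff_strict)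
  ultimately have "card C \<le> card {..g x}" by (rule card_inj_on_le) simp
  with C(3) show ?thesis by simp
qed

lemma join_in_eqI: "is_join_in S x y (j::'c::order) \<Longrightarrow> join_in S x y = j"
  unfolding join_in_def by (rule the_equality) (auto simp: is_join_in_def intro: antisym)

lemma meet_in_eqI: "is_meet_in S x y (m::'c::order) \<Longrightarrow> meet_in S x y = m"
  unfolding meet_in_def by (rule the_equality) (auto simp: is_meet_in_def intro: antisym)

lemma meet_in_UNIV: "meet_in UNIV x y = inf x (y::'c::lattice)"
  by (rule meet_in_eqI) (simp add: is_meet_in_def)

lemma join_in_UNIV: "join_in UNIV x y = sup x (y::'c::lattice)"
  by (rule join_in_eqI) (simp add: is_join_in_def)

lemma geometric_lattice_semimodular:
  fixes x y :: "'c::lattice"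
  assumes "geometric_lattice_on (UNIV :: 'c set)"
  shows "rank_in UNIV (inf x y) + rank_in UNIV (sup x y) \<le> rank_in UNIV x + rank_in UNIV y"
  using assms unfolding geometric_lattice_on_def meet_in_UNIV join_in_UNIV by blast

lemma geometric_lattice_obtain_atom:
  fixes x y :: "'c::lattice"
  assumes "geometric_lattice_on (UNIV :: 'c set)" "\<not> x \<le> y"
  obtains a where "atom_in UNIV a" "a \<le> x" "\<not> a \<le> y"
proof -
  have "is_lub_in UNIV {a. atom_in UNIV a \<and> a \<le> x} x"
    using assms(1) unfolding geometric_lattice_on_def by blast
  with assms(2) that show ?thesis unfolding is_lub_in_def by blast
qed

locale modular_coatom =
  fixes F :: "'a::{finite,bounded_lattice}"
  assumes modular: "modular_in UNIV F"
    and coatom: "rank_in UNIV F + 1 = rank_in UNIV (top :: 'a)"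
begin

lemma rank_less: "x < y \<Longrightarrow> rank_in UNIV x < rank_in UNIV (y::'a)"
  using strict_mono_on_rank_in[of "UNIV :: 'a set"] by (simp add: strict_mono_onD)

lemma rank_inf_add_one:
  assumes "\<not> A \<le> F"
  shows "rank_in UNIV (inf A F) + 1 = rank_in UNIV A"
proof -
  have "sup F A = top"
  proof (rule ccontr)
    assume "sup F A \<noteq> top"
    then have "sup F A < top" using top.not_eq_extremum by blast
    moreover have "F < sup F A" using assms by (metis sup.cobounded1 sup.cobounded2 less_le)
    ultimately show False using rank_less[of F "sup F A"] rank_less[of "sup F A" top] coatom
      by simp
  qed
  moreover have "rank_in UNIV (inf F A) + rank_in UNIV (sup F A) = rank_in UNIV F + rank_in UNIV A"
    using modular unfolding modular_in_def meet_in_UNIV join_in_UNIV by blast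
  ultimately show ?thesis using coatom by (simp add: inf_commute)
qed

lemma sup_inf_eq:
  assumes "\<not> H \<le> F" "H \<le> A"
  shows "sup (inf A F) H = A"
proof (rule ccontr)
  assume "sup (inf A F) H \<noteq> A"
  moreover have "sup (inf A F) H \<le> A" using assms(2) by (simp add: le_infI1)
  ultimately have "sup (inf A F) H < A" by (rule order.not_eq_order_implies_strict)
  then have "rank_in UNIV (sup (inf A F) H) < rank_in UNIV A" by (rule rank_less)
  moreover have "inf A F < sup (inf A F) H"
    using assms(1) by (metis inf.cobounded2 less_le order_trans sup.cobounded1 sup.cobounded2)
  then have "rank_in UNIV (inf A F) < rank_in UNIV (sup (inf A F) H)" by (rule rank_less)
  moreover have "rank_in UNIV (inf A F) + 1 = rank_in UNIV A"
    using assms order_trans by (blast intro: rank_inf_add_one)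
  ultimately show False by linarith
qed

end

locale downset_embedding =
  fixes \<iota> :: "'a::lattice \<Rightarrow> 'b::lattice" and T :: 'b
  assumes inj: "inj \<iota>"
    and sup_hom: "\<And>x y. \<iota> (sup x y) = sup (\<iota> x) (\<iota> y)"
    and range_eq: "range \<iota> = {y. y \<le> T}"
begin

lemma le_iff: "\<iota> x \<le> \<iota> y \<longleftrightarrow> x \<le> y"
  by (metis inj injD sup.absorb_iff2 sup_hom)

lemma le_T: "\<iota> x \<le> T"
  using range_eq by auto

lemma f_inv: "y \<le> T \<Longrightarrow> \<iota> (inv \<iota> y) = y"
  using range_eq by (metis f_inv_into_f mem_Collect_eq)

lemma inf_hom: "\<iota> (inf x y) = inf (\<iota> x) (\<iota> y)"
proof -
  have "inf (\<iota> x) (\<iota> y) \<le> T" using le_T[of x] by (rule inf.coboundedI1)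
  then obtain z where z: "inf (\<iota> x) (\<iota> y) = \<iota> z" using f_inv by metis
  then have "z \<le> inf x y" using le_iff by (metis inf.bounded_iff order.refl)
  then show ?thesis using z le_iff by (metis antisym inf.bounded_iff inf_le1 inf_le2)
qed

end

locale gluing = modular_coatom F + downset_embedding \<iota> T
  for F :: "'a::{finite,bounded_lattice}" and \<iota> :: "'a \<Rightarrow> 'b::{finite,lattice}" and T +
  assumes geometric_L: "geometric_lattice_on (UNIV :: 'a set)"
    and geometric_E: "geometric_lattice_on (UNIV :: 'b set)"
begin

definition glued :: "('a \<times> 'b) set" where
  "glued = {(A, B). inf A F = inv \<iota> (inf B (\<iota> F))}"

definition atom_cut :: "('a \<times> 'b) set" where
  "atom_cut = {(A, B). inf A F = inv \<iota> (inf B (\<iota> F))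
                       \<and> (\<exists>H. atom_in UNIV H \<and> \<not> H \<le> F \<and> H \<le> A \<and> \<iota> H \<le> B)}"

lemma mem_glued_iff: "(A, B) \<in> glued \<longleftrightarrow> \<iota> (inf A F) = inf B (\<iota> F)"
  unfolding glued_def mem_Collect_eq case_prod_conv
proof
  show "\<iota> (inf A F) = inf B (\<iota> F)" if "inf A F = inv \<iota> (inf B (\<iota> F))"
    using that le_T by (simp add: f_inv inf.coboundedI2)
  show "inf A F = inv \<iota> (inf B (\<iota> F))" if "\<iota> (inf A F) = inf B (\<iota> F)"
    using that inv_f_f[OF inj, of "inf A F"] by simp
qed

text \<open>In fact this is the rank function of glued; only the two bounds below are needed.\<close>
definition glued_grade :: "'a \<times> 'b \<Rightarrow> nat" where
  "glued_grade p = rank_in UNIV (snd p) + (if fst p \<le> F then 0 else 1)"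

lemma strict_mono_on_glued_grade: "strict_mono_on glued glued_grade"
proof (rule strict_mono_onI)
  fix p q assume pq: "p \<in> glued" "q \<in> glued" "p < q"
  obtain A B A' B' where p: "p = (A, B)" and q: "q = (A', B')" by fastforce
  have le: "A \<le> A'" "B \<le> B'" using less_imp_le[OF pq(3)] p q by auto
  show "glued_grade p < glued_grade q"
  proof (cases "B = B'")
    case False
    with le have "rank_in UNIV B < rank_in UNIV B'"
      using strict_mono_on_rank_in[of "UNIV :: 'b set"] by (simp add: strict_mono_onD)
    with le show ?thesis unfolding glued_grade_def p q by (auto intro: order_trans)
  next
    case True
    with pq(3) p q le have "A < A'" by (simp add: less_le)
    have "\<iota> (inf A F) = \<iota> (inf A' F)" using pq(1,2) p q True mem_glued_iff by simp
    then have eqF: "inf A F = inf A' F" using inj by (simp add: inj_eq)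
    show ?thesis
    proof (cases "A \<le> F")
      case True
      then have "\<not> A' \<le> F" using eqF \<open>A < A'\<close> by (metis inf.absorb1 less_irrefl)
      with True \<open>B = B'\<close> show ?thesis unfolding glued_grade_def p q by simp
    next
      case False
      then have "\<not> A' \<le> F" using le by (auto intro: order_trans)
      then have "rank_in UNIV A = rank_in UNIV A'"
        using rank_inf_add_one[OF False] rank_inf_add_one[of A'] eqF by simp
      with rank_less[OF \<open>A < A'\<close>] show ?thesis by simp
    qed
  qed
qed

lemma rank_glued_le: "p \<in> glued \<Longrightarrow> rank_in glued p \<le> glued_grade p"
  using rank_in_le_if_strict_mono_on[OF _ _ strict_mono_on_glued_grade] by simp

lemma mem_glued_if: "\<iota> D = inf B T \<Longrightarrow> (D, B) \<in> glued"
  by (simp add: mem_glued_iff inf_hom inf_assoc inf.absorb2[OF le_T])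

lemma rank_glued_ge:
  assumes "(A, B) \<in> glued" "\<not> A \<le> F"
  shows "rank_in UNIV B + 1 \<le> rank_in glued (A, B)"
proof -
  obtain C where C: "C \<subseteq> {z \<in> UNIV. z \<le> B}" "Complete_Partial_Order.chain (\<le>) C"
    "card C = rank_in UNIV B + 1"
    by (rule rank_in_chain[of "UNIV :: 'b set" B]) auto
  define lower where "lower b = inv \<iota> (inf b (\<iota> F))" for b
  have \<iota>_lower: "\<iota> (lower b) = inf b (\<iota> F)" for b
    unfolding lower_def using le_T by (auto intro: f_inv inf.coboundedI2)
  have lower_mono: "lower b \<le> lower b'" if "b \<le> b'" for b b'
    using that by (intro le_iff[THEN iffD1]) (simp add: \<iota>_lower inf.coboundedI1)
  have lower_le: "lower b \<le> inf A F" if "b \<le> B" for b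
    using that assms(1) by (intro le_iff[THEN iffD1]) (simp add: \<iota>_lower mem_glued_iff inf.coboundedI1)
  have lower_mem: "(lower b, b) \<in> glued" for b
    by (simp add: mem_glued_iff inf_hom \<iota>_lower inf_assoc)
  define lift where "lift b = (lower b, b)" for b
  have lift_below: "lift b \<le> (A, B)" if "b \<in> C" for b
    using that C(1) lower_le[of b] by (auto simp: lift_def)
  have "Complete_Partial_Order.chain (\<le>) (lift ` C)"
    by (rule chain_imageI[OF C(2)]) (simp add: lift_def lower_mono)
  then have "Complete_Partial_Order.chain (\<le>) (insert (A, B) (lift ` C))"
    using lift_below by (intro chain_insert_greatest) auto
  moreover have "insert (A, B) (lift ` C) \<subseteq> {z \<in> glued. z \<le> (A, B)}"
    using assms(1) lift_below lower_mem by (auto simp: lift_def)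
  ultimately have "card (insert (A, B) (lift ` C)) \<le> rank_in glued (A, B) + 1"
    by (intro card_chain_le_rank_in) simp_all
  moreover have "(A, B) \<notin> lift ` C"
    using C(1) lower_le assms(2) by (auto simp: lift_def)
  moreover have "inj_on lift C" by (rule inj_onI) (simp add: lift_def)
  ultimately show ?thesis using C(3) by (simp add: card_image)
qed

lemma inf_mem_glued:
  assumes "(A1, B1) \<in> glued" "(A2, B2) \<in> glued"
  shows "(inf A1 A2, inf B1 B2) \<in> glued"
proof -
  have "\<iota> (inf (inf A1 A2) F) = inf (\<iota> (inf A1 F)) (\<iota> (inf A2 F))"
    by (simp add: inf_hom[symmetric] inf_aci)
  with assms show ?thesis by (simp add: mem_glued_iff inf_aci)
qed

lemma meet_in_glued: "p \<in> glued \<Longrightarrow> q \<in> glued \<Longrightarrow> meet_in glued p q = inf p q"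
  by (rule meet_in_eqI) (cases p; cases q; auto simp: is_meet_in_def inf_mem_glued)

lemma join_in_glued:
  assumes "\<iota> A1 \<le> B1" "\<iota> A2 \<le> B2" "\<not> A1 \<le> F" "\<iota> D = inf (sup B1 B2) T"
  shows "join_in glued (A1, B1) (A2, B2) = (D, sup B1 B2)"
proof (rule join_in_eqI)
  have "\<iota> A1 \<le> \<iota> D" "\<iota> A2 \<le> \<iota> D"
    using assms(1,2,4) le_T by (simp_all add: le_supI1 le_supI2)
  then have "A1 \<le> D" "A2 \<le> D" by (simp_all add: le_iff)
  moreover have "D \<le> A" if "(A, B) \<in> glued" "A1 \<le> A" "sup B1 B2 \<le> B" for A B
  proof -
    have "\<iota> (inf D F) \<le> \<iota> (inf A F)"
      using that(1,3) assms(4)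
      by (simp add: mem_glued_iff inf_hom inf_assoc inf.absorb2[OF le_T] inf.coboundedI1 inf_mono)
    then have "inf D F \<le> A" using le_iff by (metis inf.boundedE)
    moreover have "sup (inf D F) A1 = D" using assms(3) \<open>A1 \<le> D\<close> by (rule sup_inf_eq)
    ultimately show ?thesis using that(2) by (metis le_sup_iff)
  qed
  ultimately show "is_join_in glued (A1, B1) (A2, B2) (D, sup B1 B2)"
    using mem_glued_if[OF assms(4)] unfolding is_join_in_def by auto
qed

lemma \<iota>_le_if_witness:
  assumes "(A, B) \<in> glued" "\<not> H \<le> F" "H \<le> A" "\<iota> H \<le> B"
  shows "\<iota> A \<le> B"
proof -
  have "\<iota> A = sup (\<iota> (inf A F)) (\<iota> H)" using sup_inf_eq[OF assms(2,3)] sup_hom by metis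
  also have "\<dots> = sup (inf B (\<iota> F)) (\<iota> H)" using assms(1) mem_glued_iff by simp
  also have "\<dots> \<le> B" using assms(4) by simp
  finally show ?thesis .
qed

lemma rank_meet_add_rank_join_less:
  assumes mem: "(A1, B1) \<in> glued" "(A2, B2) \<in> glued"
    and embedded: "\<iota> A1 \<le> B1" "\<iota> A2 \<le> B2"
    and not_le_F: "\<not> A1 \<le> F" "\<not> A2 \<le> F"
    and meet_le_F: "inf A1 A2 \<le> F"
  shows "rank_in glued (meet_in glued (A1, B1) (A2, B2))
      + rank_in glued (join_in glued (A1, B1) (A2, B2))
    < rank_in glued (A1, B1) + rank_in glued (A2, B2)"
proof -
  obtain D where D: "\<iota> D = inf (sup B1 B2) T" using f_inv by (metis inf.cobounded2)
  have "\<iota> A1 \<le> \<iota> D" using embedded(1) D le_T by (simp add: le_supI1)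
  then have "\<not> D \<le> F" using not_le_F(1) le_iff order.trans by blast
  have "rank_in UNIV B1 + 1 \<le> rank_in glued (A1, B1)"
    "rank_in UNIV B2 + 1 \<le> rank_in glued (A2, B2)"
    using rank_glued_ge mem not_le_F by simp_all
  moreover have "rank_in glued (meet_in glued (A1, B1) (A2, B2)) \<le> rank_in UNIV (inf B1 B2)"
    using rank_glued_le[OF inf_mem_glued[OF mem]] meet_in_glued[OF mem] meet_le_F
    by (simp add: glued_grade_def)
  moreover have "rank_in glued (join_in glued (A1, B1) (A2, B2)) \<le> rank_in UNIV (sup B1 B2) + 1"
    using rank_glued_le[OF mem_glued_if[OF D]] join_in_glued[OF embedded not_le_F(1) D]
      \<open>\<not> D \<le> F\<close>
    by (simp add: glued_grade_def)
  moreover have "rank_in UNIV (inf B1 B2) + rank_in UNIV (sup B1 B2)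
      \<le> rank_in UNIV B1 + rank_in UNIV B2"
    by (rule geometric_lattice_semimodular[OF geometric_E])
  ultimately show ?thesis by linarith
qed

lemma modular_cut_in_atom_cut: "modular_cut_in glued atom_cut"
  unfolding modular_cut_in_def
proof (intro conjI ballI impI)
  show "atom_cut \<subseteq> glued" by (auto simp: atom_cut_def glued_def)
next
  fix X Y assume "X \<in> atom_cut" "Y \<in> glued" "X \<le> Y"
  then show "Y \<in> atom_cut"
    by (cases X, cases Y) (auto simp: atom_cut_def glued_def intro: order.trans)
next
  fix X Y assume X: "X \<in> atom_cut" and Y: "Y \<in> atom_cut"
    and modular_pair: "rank_in glued X + rank_in glued Y
      = rank_in glued (meet_in glued X Y) + rank_in glued (join_in glued X Y)"
  obtain A1 B1 A2 B2 where XY: "X = (A1, B1)" "Y = (A2, B2)" by fastforce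
  have mem: "(A1, B1) \<in> glued" "(A2, B2) \<in> glued"
    using X Y XY by (auto simp: atom_cut_def glued_def)
  obtain H1 H2 where H1: "\<not> H1 \<le> F" "H1 \<le> A1" "\<iota> H1 \<le> B1"
    and H2: "\<not> H2 \<le> F" "H2 \<le> A2" "\<iota> H2 \<le> B2"
    using X Y XY by (auto simp: atom_cut_def)
  have embedded: "\<iota> A1 \<le> B1" "\<iota> A2 \<le> B2"
    using \<iota>_le_if_witness mem H1 H2 by blast+
  have not_le_F: "\<not> A1 \<le> F" "\<not> A2 \<le> F"
    using H1 H2 order.trans by blast+
  have "\<not> inf A1 A2 \<le> F"
    using rank_meet_add_rank_join_less[OF mem embedded not_le_F] modular_pair XY by auto
  then obtain H where H: "atom_in UNIV H" "H \<le> inf A1 A2" "\<not> H \<le> F"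
    by (rule geometric_lattice_obtain_atom[OF geometric_L])
  have "\<iota> H \<le> inf (\<iota> A1) (\<iota> A2)" using H(2) by (simp flip: inf_hom add: le_iff)
  also have "\<dots> \<le> inf B1 B2" using embedded by (rule inf_mono)
  finally show "meet_in glued X Y \<in> atom_cut"
    using H inf_mem_glued[OF mem] meet_in_glued[OF mem] XY
    by (auto simp: atom_cut_def glued_def)
qed

end

theorem mainTheorem14:
  fixes \<iota> :: "'a::finite_lattice_complete \<Rightarrow> 'b::finite_lattice_complete"
    and F :: 'a
  assumes "geometric_lattice_on (UNIV :: 'a set)"
    and "modular_extension \<iota>"
    and "modular_in UNIV F"
    and "rank_in UNIV F + 1 = rank_in UNIV (top :: 'a)"
  shows "modular_cut_in
           {(A, B). inf A F = inv \<iota> (inf B (\<iota> F))}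
           {(A, B). inf A F = inv \<iota> (inf B (\<iota> F))
                    \<and> (\<exists>H. atom_in UNIV H \<and> \<not> H \<le> F \<and> H \<le> A \<and> \<iota> H \<le> B)}"
proof -
  obtain T where "range \<iota> = {y. y \<le> T}" "geometric_lattice_on (UNIV :: 'b set)"
    "lattice_embedding \<iota>"
    using assms(2) unfolding modular_extension_def by blast
  then interpret gluing F \<iota> T
    using assms(1,3,4) unfolding lattice_embedding_def by unfold_locales auto
  show ?thesis using modular_cut_in_atom_cut unfolding glued_def atom_cut_def .
qed

end
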